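(* There exists a RobMCF instance on an acyclic digraph with two scenarios $\Lambda=\{1,2\}$, a unique source $s$ and a unique sink $t$, with $b^1(s)<b^2(s)$, and an optimal robust $\boldsymbol b$-flow $\boldsymbol f=(f^1,f^2)$ such that $c(f^2)<c(f^1)=c(\boldsymbol f)$; i.e., the cost of an optimal robust flow is not necessarily attained by the scenario flow sending the maximum demand.
   Context: A RobMCF instance $(G,u,c,\boldsymbol b)$ consists of a finite directed graph (parallel arcs allowed) $G=(V,A)$ whose arc set is partitioned as $A=A^{\mathrm{fix}}\cup A^{\mathrm{free}}$ into fixed and free arcs, capacities $u:A\to\mathbb Z_{\ge0}$, costs $c:A\to\mathbb Z_{\ge0}$, a finite nonempty set of scenarios $\Lambda$, and for each $\lambda\in\Lambda$ balances $b^\lambda:V\to\mathbb Z$ with $\sum_{v\in V}b^\lambda(v)=0$; $\boldsymbol b=(b^\lambda)_{\lambda\in\Lambda}$. A $b^\lambda$-flow is a function $f^\lambda:A\to\mathbb Z_{\ge0}$ with $f^\lambda(a)\le u(a)$ for all $a\in A$ and $\sum_{a=(v,w)\in A}f^\lambda(a)-\sum_{a=(w,v)\in A}f^\lambda(a)=b^\lambda(v)$ for all $v\in V$ (outflow minus inflow); its cost is $c(f^\lambda)=\sum_{a\in A}c(a)f^\lambda(a)$. A robust $\boldsymbol b$-flow is a tuple $\boldsymbol f=(f^\lambda)_{\lambda\in\Lambda}$ of $b^\lambda$-flows with $f^\lambda(a)=f^{\lambda'}(a)$ for all $a\in A^{\mathrm{fix}}$ and all $\lambda,\lambda'\in\Lambda$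 (consistent flow constraints); its cost is $c(\boldsymbol f)=\max_{\lambda\in\Lambda}c(f^\lambda)$. An optimal robust $\boldsymbol b$-flow is one of minimum cost. A vertex $v$ is a source (sink) in scenario $\lambda$ if $b^\lambda(v)>0$ ($b^\lambda(v)<0$). The instance has a unique source $s$ (unique sink $t$) if in every scenario $s$ is the only source ($t$ is the only sink). *)

theory Defs
  imports Main
begin

text \<open>A RobMCF instance. Arcs are abstract objects with tail and head
 (so parallel arcs are allowed). Scenarios are indexed by 's.\<close>
record ('v, 'a, 's) robmcf =
  verts :: "'v set"
  arcs :: "'a set"
  tail :: "'a \<Rightarrow> 'v"
  head :: "'a \<Rightarrow> 'v"
  fixed_arcs :: "'a set"
  cap :: "'a \<Rightarrow> nat"
  cost :: "'a \<Rightarrow> nat"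
  scen :: "'s set"
  bal :: "'s \<Rightarrow> 'v \<Rightarrow> int"

definition wf_robmcf :: "('v, 'a, 's) robmcf \<Rightarrow> bool" where
  "wf_robmcf I \<longleftrightarrow>
     finite (verts I) \<and> finite (arcs I) \<and>
     (\<forall>a\<in>arcs I. tail I a \<in> verts I \<and> head I a \<in> verts I) \<and>
     fixed_arcs I \<subseteq> arcs I \<and>
     finite (scen I) \<and> scen I \<noteq> {} \<and>
     (\<forall>l\<in>scen I. (\<Sum>v\<in>verts I. bal I l v) = 0)"

definition arc_rel :: "('v, 'a, 's) robmcf \<Rightarrow> ('v \<times> 'v) set" where
  "arc_rel I = {(tail I a, head I a) | a. a \<in> arcs I}"

definition acyclic_instance :: "('v, 'a, 's) robmcf \<Rightarrow> bool" where
  "acyclic_instance I \<longleftrightarrow> acyclic (arc_rel I)"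

definition is_bflow :: "('v, 'a, 's) robmcf \<Rightarrow> ('v \<Rightarrow> int) \<Rightarrow> ('a \<Rightarrow> nat) \<Rightarrow> bool" where
  "is_bflow I bl f \<longleftrightarrow>
     (\<forall>a\<in>arcs I. f a \<le> cap I a) \<and>
     (\<forall>v\<in>verts I.
        (\<Sum>a\<in>{a\<in>arcs I. tail I a = v}. int (f a))
      - (\<Sum>a\<in>{a\<in>arcs I. head I a = v}. int (f a)) = bl v)"

definition flow_cost :: "('v, 'a, 's) robmcf \<Rightarrow> ('a \<Rightarrow> nat) \<Rightarrow> nat" where
  "flow_cost I f = (\<Sum>a\<in>arcs I. cost I a * f a)"

definition is_robust_flow :: "('v, 'a, 's) robmcf \<Rightarrow> ('s \<Rightarrow> 'a \<Rightarrow> nat) \<Rightarrow> bool" where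
  "is_robust_flow I F \<longleftrightarrow>
     (\<forall>l\<in>scen I. is_bflow I (bal I l) (F l)) \<and>
     (\<forall>a\<in>fixed_arcs I. \<forall>l\<in>scen I. \<forall>l'\<in>scen I. F l a = F l' a)"

definition robust_cost :: "('v, 'a, 's) robmcf \<Rightarrow> ('s \<Rightarrow> 'a \<Rightarrow> nat) \<Rightarrow> nat" where
  "robust_cost I F = Max ((\<lambda>l. flow_cost I (F l)) ` scen I)"

definition is_optimal_robust_flow :: "('v, 'a, 's) robmcf \<Rightarrow> ('s \<Rightarrow> 'a \<Rightarrow> nat) \<Rightarrow> bool" where
  "is_optimal_robust_flow I F \<longleftrightarrow>
     is_robust_flow I F \<and>
     (\<forall>G. is_robust_flow I G \<longrightarrow> robust_cost I F \<le> robust_cost I G)"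

definition unique_source :: "('v, 'a, 's) robmcf \<Rightarrow> 'v \<Rightarrow> bool" where
  "unique_source I s \<longleftrightarrow> s \<in> verts I \<and>
     (\<forall>l\<in>scen I. \<forall>v\<in>verts I. bal I l v > 0 \<longleftrightarrow> v = s)"

definition unique_sink :: "('v, 'a, 's) robmcf \<Rightarrow> 'v \<Rightarrow> bool" where
  "unique_sink I t \<longleftrightarrow> t \<in> verts I \<and>
     (\<forall>l\<in>scen I. \<forall>v\<in>verts I. bal I l v < 0 \<longleftrightarrow> v = t)"

end

theory Submission
  imports Defs
begin

text \<open>Take vertices s, v, w, t, unit capacities, arcs s\<rightarrow>v and w\<rightarrow>t fixed, free arcs
v\<rightarrow>t, s\<rightarrow>w and a single expensive free arc v\<rightarrow>w, with demand 1 in scenario 1 and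
demand 2 in scenario 2. Demand 2 saturates every arc leaving s and entering t, so both
fixed arcs carry one unit in every scenario. In scenario 1 the unit entering v must
then reach w, which is only possible along the expensive arc, whereas scenario 2 is
routed for free. Hence every robust flow costs at least the price of v\<rightarrow>w, and this
is attained in scenario 1, the scenario of smaller demand.\<close>

lemma acyclic_instance_if_rank_increasing:
  fixes r :: "'v \<Rightarrow> nat"
  assumes "\<And>a. a \<in> arcs I \<Longrightarrow> r (tail I a) < r (head I a)"
  shows "acyclic_instance I"
proof -
  have "arc_rel I \<subseteq> inv_image less_than r"
    using assms by (auto simp: arc_rel_def)
  then have "wf (arc_rel I)"
    using wf_subset wf_inv_image wf_less_than by blast
  then show ?thesis
    by (simp add: acyclic_instance_def wf_acyclic)
qed

lemma is_robust_flow_bflow: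
  "is_robust_flow I F \<Longrightarrow> l \<in> scen I \<Longrightarrow> is_bflow I (bal I l) (F l)"
  by (simp add: is_robust_flow_def)

lemma is_robust_flow_fixed_arc:
  "is_robust_flow I F \<Longrightarrow> a \<in> fixed_arcs I \<Longrightarrow> l \<in> scen I \<Longrightarrow> l' \<in> scen I \<Longrightarrow>
    F l a = F l' a"
  unfolding is_robust_flow_def by blast

lemma flow_cost_le_robust_cost:
  assumes "finite (scen I)" and "l \<in> scen I"
  shows "flow_cost I (F l) \<le> robust_cost I F"
  using assms by (simp add: robust_cost_def)

lemma robust_cost_two_scenarios:
  assumes "scen I = {1, 2}"
  shows "robust_cost I F = max (flow_cost I (F 1)) (flow_cost I (F 2))"
  using assms by (simp add: robust_cost_def)

definition example_arcs :: "(nat \<times> nat) list" where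
  "example_arcs = [(0, 1), (1, 3), (0, 2), (2, 3), (1, 2)]"

text \<open>Vertices 0, 1, 2, 3 are s, v, w, t, and arc a has (tail, head) = example_arcs ! a;
so 0 and 3 are the fixed arcs s\<rightarrow>v and w\<rightarrow>t and 4 is the expensive arc v\<rightarrow>w.\<close>

definition example :: "(nat, nat, nat) robmcf" where
  "example = \<lparr> verts = {0, 1, 2, 3}, arcs = {0 ..< length example_arcs},
     tail = (\<lambda>a. fst (example_arcs ! a)), head = (\<lambda>a. snd (example_arcs ! a)),
     fixed_arcs = {0, 3}, cap = (\<lambda>_. 1), cost = (\<lambda>a. if a = 4 then 10 else 0),
     scen = {1, 2},
     bal = (\<lambda>l v. if v = 0 then int l else if v = 3 then - int l else 0) \<rparr>"

lemma example_simps [simp]: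
  "verts example = {0, 1, 2, 3}" "arcs example = {0, 1, 2, 3, 4}"
  "tail example = (\<lambda>a. fst (example_arcs ! a))" "head example = (\<lambda>a. snd (example_arcs ! a))"
  "fixed_arcs example = {0, 3}" "cap example = (\<lambda>_. 1)"
  "cost example = (\<lambda>a. if a = 4 then 10 else 0)" "scen example = {1, 2}"
  "bal example = (\<lambda>l v. if v = 0 then int l else if v = 3 then - int l else 0)"
  by (auto simp: example_def example_arcs_def)

lemma is_bflow_example_iff:
  "is_bflow example b f \<longleftrightarrow>
     (\<forall>a \<in> arcs example. f a \<le> 1) \<and>
     int (f 0) + int (f 2) = b 0 \<and>
     int (f 1) + int (f 4) - int (f 0) = b 1 \<and>
     int (f 3) - int (f 2) - int (f 4) = b 2 \<and>
     - int (f 1) - int (f 3) = b 3"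
proof -
  have incident_arcs: "{a \<in> arcs example. tail example a = 0} = {0, 2}"
       "{a \<in> arcs example. tail example a = 1} = {1, 4}"
       "{a \<in> arcs example. tail example a = 2} = {3}"
       "{a \<in> arcs example. tail example a = 3} = {}"
       "{a \<in> arcs example. head example a = 0} = {}"
       "{a \<in> arcs example. head example a = 1} = {0}"
       "{a \<in> arcs example. head example a = 2} = {2, 4}"
       "{a \<in> arcs example. head example a = 3} = {1, 3}"
    by (auto simp: example_arcs_def nth_Cons')
  show ?thesis
    unfolding is_bflow_def example_simps(1) ball_simps(5,7) incident_arcs by (simp add: algebra_simps)
qed

definition example_flow :: "nat \<Rightarrow> nat \<Rightarrow> nat" where
  "example_flow l a =
     (if l = 1 then (if a \<in> {0, 3, 4} then 1 else 0) else (if a \<in> {0, 1, 2, 3} then 1 else 0))"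

lemma example_flow_robust: "is_robust_flow example example_flow"
  by (simp add: is_robust_flow_def is_bflow_example_iff example_flow_def)

lemma example_flow_costs:
  "flow_cost example (example_flow 1) = 10" "flow_cost example (example_flow 2) = 0"
  by (simp_all add: flow_cost_def example_flow_def)

lemma robust_flow_example_uses_expensive_arc:
  assumes "is_robust_flow example G"
  shows "G 1 4 = 1"
proof -
  have flow1: "is_bflow example (bal example 1) (G 1)"
    and flow2: "is_bflow example (bal example 2) (G 2)"
    by (rule is_robust_flow_bflow [OF assms], simp)+
  have fixed: "G 1 0 = G 2 0" "G 1 3 = G 2 3"
    using is_robust_flow_fixed_arc [OF assms, of 0 1 2]
      is_robust_flow_fixed_arc [OF assms, of 3 1 2]
    by simp_all
  have "G 2 0 \<le> 1" "G 2 1 \<le> 1" "G 2 2 \<le> 1" "G 2 3 \<le> 1"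
    "int (G 2 0) + int (G 2 2) = 2" "- int (G 2 1) - int (G 2 3) = -2"
    using flow2 unfolding is_bflow_example_iff by simp_all
  moreover have "int (G 1 0) + int (G 1 2) = 1" "int (G 1 3) - int (G 1 2) - int (G 1 4) = 0"
    using flow1 unfolding is_bflow_example_iff by simp_all
  ultimately show ?thesis
    using fixed by linarith
qed

lemma robust_cost_example_ge:
  assumes "is_robust_flow example G"
  shows "10 \<le> robust_cost example G"
proof -
  have "10 \<le> flow_cost example (G 1)"
    using robust_flow_example_uses_expensive_arc [OF assms] by (simp add: flow_cost_def)
  also have "\<dots> \<le> robust_cost example G"
    by (simp add: flow_cost_le_robust_cost)
  finally show ?thesis .
qed

theorem mainTheorem4:
  shows "\<exists>(I :: (nat, nat, nat) robmcf) s t F.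
     wf_robmcf I \<and> acyclic_instance I \<and> scen I = {1, 2} \<and>
     unique_source I s \<and> unique_sink I t \<and>
     bal I 1 s < bal I 2 s \<and>
     is_optimal_robust_flow I F \<and>
     flow_cost I (F 2) < flow_cost I (F 1) \<and>
     flow_cost I (F 1) = robust_cost I F"
proof (intro exI conjI)
  have cost: "robust_cost example example_flow = 10"
    unfolding robust_cost_two_scenarios [OF example_simps(8)] example_flow_costs by simp
  show "wf_robmcf example"
    by (auto simp: wf_robmcf_def example_arcs_def)
  show "acyclic_instance example"
    by (rule acyclic_instance_if_rank_increasing [where r = id])
      (auto simp: example_arcs_def nth_Cons')
  show "is_optimal_robust_flow example example_flow"
    using example_flow_robust robust_cost_example_ge
    by (simp add: is_optimal_robust_flow_def cost)
  show "flow_cost example (example_flow 2) < flow_cost example (example_flow 1)"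
    "flow_cost example (example_flow 1) = robust_cost example example_flow"
    unfolding example_flow_costs cost by simp_all
  show "unique_source example 0" "unique_sink example 3"
    by (auto simp: unique_source_def unique_sink_def)
qed simp_all

end
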